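(* Let $n\ge 2$ and let $R$ be a real polynomial of degree $n-1$. Let $a_1,\dots,a_{n-1}\in\mathbb C$ be the numbers (unique up to permutation) such that, writing $e^xR(x)=\sum_{j\ge 0}\gamma_j x^j/j!$, one has $\gamma_j=c\prod_{i=1}^{n-1}(j+a_i)$ for all integers $j\ge0$, for some constant $c\ne 0$ (equivalently, $e^xR$ is, up to a nonzero constant factor, the Schur–Szegő composition of the $n-1$ factors $e^x(1+x/a_i)$ for $a_i\neq 0$ and $e^xx$ for $a_i=0$). (1) If $R$ has exactly $m\ge0$ positive roots counted with multiplicity and a root of multiplicity exactly $k\ge 0$ at $0$, then among the numbers $a_i$ there are at least $m+\max(0,k-1)$ pairwise distinct negative real numbers, $\max(0,k-1)$ of which are $-1,-2,\dots,-(k-1)$; moreover, if $k\ge1$, then one of the $a_i$ equals $0$ (i.e. one composition factor equals $e^xx$). (2) If exactly $q$ of the numbers $a_i$ equal $0$ and exactly $q_1$ of them are positive real numbers, then $R$ has at least $q_1+\max(0,q-1)$ negative roots counted with multiplicity; and if $q\ge1$, then $R(0)=0$.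
   Context: Schur–Szegő composition of entire functions: for $f=\sum_{j\ge0}\gamma_jx^j/j!$ and $g=\sum_{j\ge0}\delta_jx^j/j!$ (everywhere convergent series) one sets $f*g=\sum_{j\ge0}\gamma_j\delta_jx^j/j!$; it is commutative and associative. One has $e^x(1+x/a)=\sum_j\frac{a+j}{a}\frac{x^j}{j!}$ and $e^xx=\sum_j j\frac{x^j}{j!}$, $e^x\cdot c=\sum_j c\frac{x^j}{j!}$. For a polynomial $R$ of degree $n-1$, the coefficient $\gamma_j$ of $x^j/j!$ in $e^xR$ is a polynomial in $j$ of degree $n-1$, whose roots are the numbers $-a_i$; this defines the $a_i$ (unique up to permutation). For real $R$ the non-real $a_i$ come in complex conjugate pairs. *)

theory Defs
  imports "HOL-Computational_Algebra.Computational_Algebra"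
begin

definition exp_poly_coeff :: "real poly \<Rightarrow> nat \<Rightarrow> real" where
  "exp_poly_coeff R j = fact j * fps_nth (fps_exp 1 * fps_of_poly R) j"

end

(*
  Write gamma_j(R) for the coefficient of x^j/j! in e^x R; it equals P(j) for a real polynomial P
  whose complex roots are the numbers -a_i.

  (1) Write R = x^k Q with Q(0) \<noteq> 0. Then gamma_j(R) = 0 for j < k, which puts 0, -1, ..., -(k-1)
  among the a_i, and gamma_(j+k)(R) is a positive multiple of gamma_j(Q). Multiplying Q by x - p with
  p > 0 adds a sign change to the sequence gamma(Q), so gamma(Q) changes sign at least m times, and
  every sign change of j \<mapsto> P(j + k) gives a real root of P beyond k.

  (2) A real factor x + b of P with b \<ge> 0 corresponds to f \<mapsto> x (f' + f) + b f on the side of R.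
  On x < 0 this is x (-x)^(-b) e^(-x) times the derivative of (-x)^b e^x f, so by Rolle's theorem it
  gains a negative root, and it does so even for b = 0 as soon as f(0) = 0.
*)

theory Submission
  imports Defs "HOL-Real_Asymp.Real_Asymp"
begin

section \<open>The coefficients of e^x R\<close>

lemma exp_poly_coeff_0 [simp]: "exp_poly_coeff 0 j = 0"
  by (simp add: exp_poly_coeff_def)

lemma exp_poly_coeff_add: "exp_poly_coeff (p + q) j = exp_poly_coeff p j + exp_poly_coeff q j"
  by (simp add: exp_poly_coeff_def fps_of_poly_add algebra_simps)

lemma exp_poly_coeff_smult: "exp_poly_coeff (smult a p) j = a * exp_poly_coeff p j"
  by (simp add: exp_poly_coeff_def fps_of_poly_smult algebra_simps)

lemma exp_poly_coeff_const: "exp_poly_coeff [:a:] j = a"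
  by (simp add: exp_poly_coeff_def fps_of_poly_const)

lemma exp_poly_coeff_at_0: "exp_poly_coeff R 0 = poly R 0"
  by (simp add: exp_poly_coeff_def fps_mult_nth poly_0_coeff_0)

lemma exp_poly_coeff_pCons_0: "exp_poly_coeff (pCons 0 p) j = of_nat j * exp_poly_coeff p (j - 1)"
proof -
  have eq: "fps_exp 1 * fps_of_poly (pCons 0 p) = fps_X * (fps_exp 1 * fps_of_poly p)"
    by (simp add: fps_of_poly_pCons algebra_simps)
  show ?thesis
    unfolding exp_poly_coeff_def eq by (cases j) (simp_all add: fps_X_mult_nth)
qed

lemma exp_poly_coeff_pCons: "exp_poly_coeff (pCons a p) j = a + of_nat j * exp_poly_coeff p (j - 1)"
proof -
  have "exp_poly_coeff (pCons a p) j = exp_poly_coeff ([:a:] + pCons 0 p) j"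
    by simp
  also have "\<dots> = a + of_nat j * exp_poly_coeff p (j - 1)"
    by (simp only: exp_poly_coeff_add exp_poly_coeff_const exp_poly_coeff_pCons_0)
  finally show ?thesis .
qed

lemma exp_poly_coeff_eqI:
  assumes "\<And>j. exp_poly_coeff p j = exp_poly_coeff q j"
  shows "p = q"
proof -
  have "fps_exp 1 * fps_of_poly p = fps_exp 1 * fps_of_poly q"
    using assms by (intro fps_ext) (simp add: exp_poly_coeff_def)
  moreover have "fps_exp (1::real) \<noteq> 0"
    by (rule fps_nonzeroI[of _ 0]) simp
  ultimately show ?thesis
    by (simp add: fps_of_poly_eq_iff)
qed

lemma exp_poly_coeff_poly:
  "\<exists>P. degree P = degree Q \<and> lead_coeff P = lead_coeff Q
       \<and> (\<forall>j. exp_poly_coeff Q j = poly P (real j))"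
proof (induction Q)
  case 0
  show ?case by (intro exI[of _ 0]) simp
next
  case (pCons a Q)
  show ?case
  proof (cases "Q = 0")
    case True
    then show ?thesis by (intro exI[of _ "[:a:]"]) (simp add: exp_poly_coeff_const)
  next
    case False
    from pCons.IH obtain P where P: "degree P = degree Q" "lead_coeff P = lead_coeff Q"
      "\<forall>j. exp_poly_coeff Q j = poly P (real j)" by blast
    define P' where "P' = pcompose P [:-1, 1:]"
    have "degree P' = degree P"
      by (simp add: P'_def degree_pcompose)
    moreover have "lead_coeff P' = lead_coeff P"
      unfolding P'_def by (simp add: lead_coeff_comp)
    ultimately have "degree P' = degree Q" "lead_coeff P' = lead_coeff Q"
      using P by simp_all
    moreover have "P' \<noteq> 0"
      using \<open>lead_coeff P' = lead_coeff Q\<close> False by auto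
    moreover have "exp_poly_coeff (pCons a Q) j = poly (pCons a P') (real j)" for j
      unfolding exp_poly_coeff_pCons P'_def by (cases j) (simp_all add: P(3) poly_pcompose)
    ultimately show ?thesis
      using False by (intro exI[of _ "pCons a P'"]) simp
  qed
qed

lemma eventually_poly_sign_lead_coeff:
  fixes P :: "real poly"
  assumes "P \<noteq> 0"
  shows "\<forall>\<^sub>F x in at_top. 0 < poly P x * lead_coeff P"
proof (cases "0 < lead_coeff P")
  case True
  then obtain n where "\<forall>x\<ge>n. lead_coeff P \<le> poly P x"
    using poly_pinfty_gt_lc by blast
  then show ?thesis
    using True by (auto simp: eventually_at_top_linorder intro!: exI[of _ n])
next
  case False
  with assms have "lead_coeff P < 0" by (simp add: less_le)
  then obtain n where "\<forall>x\<ge>n. lead_coeff (- P) \<le> poly (- P) x"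
    using poly_pinfty_gt_lc[of "- P"] by auto
  with \<open>lead_coeff P < 0\<close> show ?thesis
    by (auto simp: eventually_at_top_linorder intro!: exI[of _ n] mult_neg_neg)
qed

lemma eventually_exp_poly_coeff_sign:
  assumes "Q \<noteq> 0"
  shows "\<forall>\<^sub>F j in sequentially. 0 < exp_poly_coeff Q j * lead_coeff Q"
proof -
  obtain P where P: "lead_coeff P = lead_coeff Q" "\<forall>j. exp_poly_coeff Q j = poly P (real j)"
    using exp_poly_coeff_poly by blast
  moreover have "P \<noteq> 0"
    using P(1) assms by auto
  ultimately have "\<forall>\<^sub>F x in at_top. 0 < poly P x * lead_coeff Q"
    using eventually_poly_sign_lead_coeff by metis
  then show ?thesis
    using eventually_compose_filterlim[OF _ filterlim_real_sequentially] P(2) by auto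
qed

section \<open>A Schur--Szeg\<H>o factor\<close>

text \<open>e^x (szego_step a f) = (x d/dx + a) (e^x f), so szego_step a multiplies the coefficient of
  x^j/j! by j + a: it is the Schur--Szeg\<H>o composition with e^x (x + a).\<close>
definition szego_step :: "real \<Rightarrow> real poly \<Rightarrow> real poly" where
  "szego_step a f = pCons 0 (pderiv f + f) + smult a f"

lemma exp_poly_coeff_szego_step:
  "exp_poly_coeff (szego_step a f) j = (of_nat j + a) * exp_poly_coeff f j"
proof -
  define F where "F = fps_exp (1::real) * fps_of_poly f"
  have "fps_exp 1 * fps_of_poly (szego_step a f) = fps_X * fps_deriv F + fps_const a * F"
    by (simp add: szego_step_def F_def fps_of_poly_add fps_of_poly_pCons fps_of_poly_pderiv
        fps_of_poly_smult fps_deriv_mult fps_exp_deriv algebra_simps)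
  then have "fps_nth (fps_exp 1 * fps_of_poly (szego_step a f)) j = (of_nat j + a) * F $ j"
    by (cases j) (simp_all add: fps_X_mult_nth fps_deriv_nth algebra_simps)
  then show ?thesis
    by (simp add: exp_poly_coeff_def F_def)
qed

lemma exp_poly_coeff_foldr_szego_step:
  "exp_poly_coeff (foldr szego_step bs f) j = (\<Prod>b\<leftarrow>bs. of_nat j + b) * exp_poly_coeff f j"
  by (induction bs) (simp_all add: exp_poly_coeff_szego_step)

lemma exp_poly_coeff_surj: "\<exists>R. \<forall>j. exp_poly_coeff R j = poly P (real j)"
proof (induction P)
  case 0
  show ?case by (intro exI[of _ 0]) simp
next
  case (pCons a P)
  then obtain R where "\<forall>j. exp_poly_coeff R j = poly P (real j)" by blast
  then show ?case
    by (intro exI[of _ "[:a:] + szego_step 0 R"])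
      (simp add: exp_poly_coeff_add exp_poly_coeff_const exp_poly_coeff_szego_step)
qed

lemma poly_szego_step: "poly (szego_step a f) x = x * (poly (pderiv f) x + poly f x) + a * poly f x"
  by (simp add: szego_step_def)

lemma szego_step_nonzero:
  assumes "f \<noteq> 0"
  shows "szego_step a f \<noteq> 0"
proof -
  have "coeff (szego_step a f) (Suc (degree f)) = lead_coeff f"
    by (simp add: szego_step_def coeff_pderiv coeff_eq_0)
  with assms show ?thesis by auto
qed

lemma order_le_Suc_order_szego_step:
  fixes f :: "real poly"
  assumes "f \<noteq> 0" "poly f x = 0"
  shows "order x f \<le> Suc (order x (szego_step a f))"
proof -
  let ?d = "[:-x, 1:] ^ (order x f - 1)"
  have f: "?d dvd f"
    by (rule dvd_trans[OF le_imp_power_dvd order_1]) simp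
  have f': "?d dvd pderiv f"
  proof (cases "pderiv f = 0")
    case False
    then show ?thesis
      using order_pderiv[OF _ assms(2)] assms(1) order_1[of x "pderiv f"] by simp
  qed simp
  have "?d dvd szego_step a f"
  proof -
    have "szego_step a f = [:0, 1:] * (pderiv f + f) + smult a f"
      by (simp add: szego_step_def)
    then show ?thesis
      by (simp only: dvd_add dvd_mult dvd_smult f f')
  qed
  then have "order x f - 1 \<le> order x (szego_step a f)"
    using order_divides szego_step_nonzero[OF assms(1)] by blast
  then show ?thesis by simp
qed

section \<open>Counting real roots with multiplicity\<close>

definition proots_count :: "real poly \<Rightarrow> real set \<Rightarrow> nat" where
  "proots_count f S = (\<Sum>x\<in>{x\<in>S. poly f x = 0}. order x f)"

lemma sum_order_le_proots_count:
  assumes "f \<noteq> 0" "finite T" "T \<subseteq> S"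
  shows "(\<Sum>x\<in>T. order x f) \<le> proots_count f S"
proof -
  have "(\<Sum>x\<in>T. order x f) = (\<Sum>x\<in>T \<inter> {x\<in>S. poly f x = 0}. order x f)"
    using assms by (intro sum.mono_neutral_right) (auto simp: order_root)
  also have "\<dots> \<le> proots_count f S"
    unfolding proots_count_def using poly_roots_finite[OF assms(1)]
    by (intro sum_mono2) auto
  finally show ?thesis .
qed

lemma proots_count_eq_sum:
  assumes "f \<noteq> 0" "finite T" "{x\<in>S. poly f x = 0} \<subseteq> T" "T \<subseteq> S"
  shows "proots_count f S = (\<Sum>x\<in>T. order x f)"
  unfolding proots_count_def using assms
  by (intro sum.mono_neutral_left) (auto simp: order_root)

lemma proots_count_mult:
  assumes "f \<noteq> 0" "g \<noteq> 0"
  shows "proots_count (f * g) S = proots_count f S + proots_count g S"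
proof -
  let ?Z = "{x\<in>S. poly (f * g) x = 0}"
  have fin: "finite ?Z"
    using poly_roots_finite[of "f * g"] assms by (auto intro: rev_finite_subset)
  have "proots_count (f * g) S = (\<Sum>x\<in>?Z. order x f + order x g)"
    unfolding proots_count_def using assms by (intro sum.cong) (auto simp: order_mult)
  also have "\<dots> = (\<Sum>x\<in>?Z. order x f) + (\<Sum>x\<in>?Z. order x g)"
    by (rule sum.distrib)
  also have "(\<Sum>x\<in>?Z. order x f) = proots_count f S"
    using assms fin by (intro proots_count_eq_sum[symmetric]) auto
  also have "(\<Sum>x\<in>?Z. order x g) = proots_count g S"
    using assms fin by (intro proots_count_eq_sum[symmetric]) auto
  finally show ?thesis .
qed

lemma proots_count_eq_0_iff:
  assumes "f \<noteq> 0"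
  shows "proots_count f S = 0 \<longleftrightarrow> (\<forall>x\<in>S. poly f x \<noteq> 0)"
  using assms poly_roots_finite[OF assms]
  by (auto simp: proots_count_def sum_eq_0_iff order_root)

lemma proots_count_linear:
  assumes "p \<in> S"
  shows "proots_count [:-p, 1:] S = 1"
proof -
  have "{x\<in>S. poly [:-p, 1:] x = 0} = {p}"
    using assms by auto
  then show ?thesis
    using order_power_n_n[of p 1] by (simp add: proots_count_def)
qed

section \<open>Rolle's theorem and negative roots\<close>

lemma DERIV_zero_between_peak:
  fixes h D :: "real \<Rightarrow> real"
  assumes "u < y" "y < v"
    and der: "\<And>x. u \<le> x \<Longrightarrow> x \<le> v \<Longrightarrow> (h has_real_derivative D x) (at x)"
    and "h u < h y" "h v < h y"
  shows "\<exists>c. u < c \<and> c < v \<and> D c = 0"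
proof -
  have "\<forall>x. u \<le> x \<and> x \<le> v \<longrightarrow> isCont h x"
    using der DERIV_isCont by blast
  then obtain c where c: "u \<le> c" "c \<le> v" "\<forall>x. u \<le> x \<and> x \<le> v \<longrightarrow> h x \<le> h c"
    using isCont_eq_Ub[of u v h] assms(1,2) by auto
  with assms(1,2,4,5) have "u < c" "c < v"
    by (smt (verit))+
  moreover have "D c = 0"
  proof (rule DERIV_local_max[OF der])
    show "0 < min (c - u) (v - c)"
      using \<open>u < c\<close> \<open>c < v\<close> by simp
    show "\<forall>y. \<bar>c - y\<bar> < min (c - u) (v - c) \<longrightarrow> h y \<le> h c"
      using c(3) by (auto simp: abs_if)
  qed (use c in auto)
  ultimately show ?thesis by blast
qed

lemma DERIV_zero_between_abs_peak:
  fixes h D :: "real \<Rightarrow> real"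
  assumes "u < y" "y < v"
    and der: "\<And>x. u \<le> x \<Longrightarrow> x \<le> v \<Longrightarrow> (h has_real_derivative D x) (at x)"
    and "\<bar>h u\<bar> < \<bar>h y\<bar>" "\<bar>h v\<bar> < \<bar>h y\<bar>"
  shows "\<exists>c. u < c \<and> c < v \<and> D c = 0"
proof (cases "0 < h y")
  case True
  with assms show ?thesis
    by (intro DERIV_zero_between_peak[OF assms(1-3)]) auto
next
  case False
  have "\<exists>c. u < c \<and> c < v \<and> - D c = 0"
    using False assms
    by (intro DERIV_zero_between_peak[OF assms(1,2), of "\<lambda>x. - h x"]) (auto intro: DERIV_minus)
  then show ?thesis by auto
qed

lemma peak_above_roots:
  fixes f :: "real poly" and h :: "real \<Rightarrow> real"
  assumes "f \<noteq> 0"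
    and hf: "\<And>x. x < 0 \<Longrightarrow> h x = 0 \<longleftrightarrow> poly f x = 0"
    and lim_bot: "(h \<longlongrightarrow> 0) at_bot"
    and "x \<le> 0"
  obtains u y where "u < y" "y < x" "\<bar>h u\<bar> < \<bar>h y\<bar>" "\<And>w. w < x \<Longrightarrow> poly f w = 0 \<Longrightarrow> w \<le> u"
proof -
  define B where "B = {w. w < x \<and> poly f w = 0}"
  have "finite B"
    using poly_roots_finite[OF assms(1)] by (auto simp: B_def intro: rev_finite_subset)
  show ?thesis
  proof (cases "B = {}")
    case True
    have "x - 1 \<notin> B" "x - 1 < 0"
      using True \<open>x \<le> 0\<close> by auto
    then have "h (x - 1) \<noteq> 0"
      using hf[of "x - 1"] by (simp add: B_def)
    then have "\<forall>\<^sub>F t in at_bot. \<bar>h t\<bar> < \<bar>h (x - 1)\<bar>"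
      using tendstoD[OF lim_bot, of "\<bar>h (x - 1)\<bar>"] by simp
    moreover have "\<forall>\<^sub>F t in at_bot. t < x - 1"
      by simp
    ultimately have "\<forall>\<^sub>F t in at_bot. \<bar>h t\<bar> < \<bar>h (x - 1)\<bar> \<and> t < x - 1"
      by (rule eventually_conj)
    then obtain N where "\<forall>t\<le>N. \<bar>h t\<bar> < \<bar>h (x - 1)\<bar> \<and> t < x - 1"
      by (auto simp: eventually_at_bot_linorder)
    with True show ?thesis
      by (intro that[of N "x - 1"]) (auto simp: B_def)
  next
    case False
    define L where "L = Max B"
    have "L \<in> B" and L_max: "\<forall>w\<in>B. w \<le> L"
      using Max_in[OF \<open>finite B\<close> False] \<open>finite B\<close> by (auto simp: L_def)
    then have "L < x" "h L = 0"
      using hf[of L] \<open>x \<le> 0\<close> by (auto simp: B_def)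
    define y where "y = (L + x) / 2"
    have "L < y" "y < x"
      using \<open>L < x\<close> by (auto simp: y_def)
    then have "y \<notin> B"
      using L_max by force
    then have "h y \<noteq> 0"
      using hf[of y] \<open>y < x\<close> \<open>x \<le> 0\<close> by (simp add: B_def)
    with \<open>h L = 0\<close> show ?thesis
      using \<open>L < y\<close> \<open>y < x\<close> L_max by (intro that[of L y]) (auto simp: B_def)
  qed
qed

lemma DERIV_root_below:
  fixes f :: "real poly" and h D :: "real \<Rightarrow> real"
  assumes "f \<noteq> 0"
    and der: "\<And>x. x < 0 \<Longrightarrow> (h has_real_derivative D x) (at x)"
    and hf: "\<And>x. x < 0 \<Longrightarrow> h x = 0 \<longleftrightarrow> poly f x = 0"
    and lim_bot: "(h \<longlongrightarrow> 0) at_bot"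
    and "x \<le> 0" and lim_x: "(h \<longlongrightarrow> 0) (at_left x)"
  shows "\<exists>c<x. D c = 0 \<and> (\<forall>w<x. poly f w = 0 \<longrightarrow> w < c)"
proof -
  obtain u y where uy: "u < y" "y < x" "\<bar>h u\<bar> < \<bar>h y\<bar>"
    and below: "\<And>w. w < x \<Longrightarrow> poly f w = 0 \<Longrightarrow> w \<le> u"
    using peak_above_roots[OF assms(1) hf lim_bot \<open>x \<le> 0\<close>] by blast
  have "\<forall>\<^sub>F t in at_left x. \<bar>h t\<bar> < \<bar>h y\<bar>"
    using tendstoD[OF lim_x, of "\<bar>h y\<bar>"] uy(3) by simp
  moreover have "\<forall>\<^sub>F t in at_left x. t \<in> {y<..<x}"
    by (rule eventually_at_left_real[OF uy(2)])
  ultimately have "\<forall>\<^sub>F t in at_left x. \<bar>h t\<bar> < \<bar>h y\<bar> \<and> t \<in> {y<..<x}"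
    by (rule eventually_conj)
  then obtain v where v: "\<bar>h v\<bar> < \<bar>h y\<bar>" "y < v" "v < x"
    using eventually_happens[of _ "at_left x"] trivial_limit_at_left_real by force
  obtain c where c: "u < c" "c < v" "D c = 0"
    using DERIV_zero_between_abs_peak[OF uy(1) v(2) der uy(3) v(1)] v(3) \<open>x \<le> 0\<close> by force
  with v below show ?thesis
    by (intro exI[of _ c]) force
qed

lemma DERIV_roots_interlace:
  fixes f :: "real poly" and h D :: "real \<Rightarrow> real"
  assumes "f \<noteq> 0"
    and der: "\<And>x. x < 0 \<Longrightarrow> (h has_real_derivative D x) (at x)"
    and hf: "\<And>x. x < 0 \<Longrightarrow> h x = 0 \<longleftrightarrow> poly f x = 0"
    and lim_bot: "(h \<longlongrightarrow> 0) at_bot"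
    and lim_0: "vanishes_at_0 \<Longrightarrow> (h \<longlongrightarrow> 0) (at_left 0)"
  defines "G \<equiv> {x\<in>{..<0}. poly f x = 0} \<union> (if vanishes_at_0 then {0} else {})"
  obtains z where "inj_on z G" "\<And>x. x \<in> G \<Longrightarrow> z x < 0 \<and> D (z x) = 0 \<and> poly f (z x) \<noteq> 0"
proof -
  have G_cases: "x < 0 \<and> poly f x = 0 \<or> x = 0 \<and> vanishes_at_0" if "x \<in> G" for x
    using that by (auto simp: G_def split: if_splits)
  have "\<exists>c<x. D c = 0 \<and> (\<forall>w<x. poly f w = 0 \<longrightarrow> w < c)" if "x \<in> G" for x
  proof -
    have "x \<le> 0 \<and> (h \<longlongrightarrow> 0) (at_left x)"
      using G_cases[OF that]
    proof
      assume "x < 0 \<and> poly f x = 0"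
      then have "x < 0" "h x = 0"
        using hf[of x] by auto
      moreover have "(h \<longlongrightarrow> h x) (at x)"
        using DERIV_isCont[OF der[OF \<open>x < 0\<close>]] by (simp add: isCont_def)
      ultimately show ?thesis
        using tendsto_mono[OF at_within_le_at] by auto
    qed (use lim_0 in auto)
    then show ?thesis
      using DERIV_root_below[OF assms(1) der hf lim_bot] by blast
  qed
  then obtain z where z: "\<And>x. x \<in> G \<Longrightarrow> z x < x \<and> D (z x) = 0 \<and> (\<forall>w<x. poly f w = 0 \<longrightarrow> w < z x)"
    by metis
  have z_mono: "z x1 < z x2" if "x1 \<in> G" "x2 \<in> G" "x1 < x2" for x1 x2
  proof -
    have "poly f x1 = 0"
      using G_cases[OF that(1)] G_cases[OF that(2)] that(3) by auto
    then show ?thesis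
      using z[OF that(1)] z[OF that(2)] that(3) by auto
  qed
  have "inj_on z G"
    by (rule inj_onI) (metis linorder_neqE_linordered_idom order_less_irrefl z_mono)
  moreover have "z x < 0 \<and> D (z x) = 0 \<and> poly f (z x) \<noteq> 0" if "x \<in> G" for x
    using z[OF that] G_cases[OF that] by fastforce
  ultimately show ?thesis
    using that by blast
qed

lemma card_le_sum_order:
  fixes g :: "'a::idom poly"
  assumes "g \<noteq> 0" "\<And>x. x \<in> Z \<Longrightarrow> poly g x = 0"
  shows "card Z \<le> (\<Sum>x\<in>Z. order x g)"
  unfolding card_eq_sum using assms order_root[of g]
  by (intro sum_mono) (auto simp: Suc_le_eq)

lemma proots_count_neg_le_DERIV:
  fixes f g :: "real poly" and h D :: "real \<Rightarrow> real"
  assumes "f \<noteq> 0" "g \<noteq> 0"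
    and der: "\<And>x. x < 0 \<Longrightarrow> (h has_real_derivative D x) (at x)"
    and Dg: "\<And>x. x < 0 \<Longrightarrow> D x = 0 \<Longrightarrow> poly g x = 0"
    and hf: "\<And>x. x < 0 \<Longrightarrow> h x = 0 \<longleftrightarrow> poly f x = 0"
    and lim_bot: "(h \<longlongrightarrow> 0) at_bot"
    and ord: "\<And>x. x < 0 \<Longrightarrow> poly f x = 0 \<Longrightarrow> order x f \<le> Suc (order x g)"
    and lim_0: "vanishes_at_0 \<Longrightarrow> (h \<longlongrightarrow> 0) (at_left 0)"
  shows "proots_count f {..<0} + (if vanishes_at_0 then 1 else 0) \<le> proots_count g {..<0}"
proof -
  define X where "X = {x\<in>{..<0}. poly f x = 0}"
  define G where "G = X \<union> (if vanishes_at_0 then {0} else {})"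
  obtain z where "inj_on z G" and z: "\<And>x. x \<in> G \<Longrightarrow> z x < 0 \<and> D (z x) = 0 \<and> poly f (z x) \<noteq> 0"
    using DERIV_roots_interlace[OF assms(1) der hf lim_bot lim_0] unfolding G_def X_def by blast
  have "finite X"
    using poly_roots_finite[OF assms(1)] by (auto simp: X_def intro: rev_finite_subset)
  then have "finite (z ` G)"
    by (simp add: G_def)
  have "card (z ` G) = card X + (if vanishes_at_0 then 1 else 0)"
    using card_image[OF \<open>inj_on z G\<close>] \<open>finite X\<close> by (auto simp: G_def X_def)
  moreover have "card (z ` G) \<le> (\<Sum>x\<in>z ` G. order x g)"
    using z Dg by (intro card_le_sum_order \<open>g \<noteq> 0\<close>) auto
  moreover have "proots_count f {..<0} \<le> (\<Sum>x\<in>X. order x g) + card X"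
  proof -
    have "proots_count f {..<0} \<le> (\<Sum>x\<in>X. Suc (order x g))"
      unfolding proots_count_def X_def[symmetric] by (rule sum_mono) (use ord in \<open>auto simp: X_def\<close>)
    also have "\<dots> = (\<Sum>x\<in>X. order x g) + card X"
      unfolding Suc_eq_plus1 sum.distrib by simp
    finally show ?thesis .
  qed
  moreover have "(\<Sum>x\<in>X. order x g) + (\<Sum>x\<in>z ` G. order x g) \<le> proots_count g {..<0}"
  proof -
    have "X \<inter> z ` G = {}"
      using z by (auto simp: X_def)
    moreover have "(\<Sum>x\<in>X \<union> z ` G. order x g) \<le> proots_count g {..<0}"
      using \<open>finite X\<close> \<open>finite (z ` G)\<close> \<open>g \<noteq> 0\<close> z
      by (intro sum_order_le_proots_count) (auto simp: X_def)
    ultimately show ?thesis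
      using \<open>finite X\<close> \<open>finite (z ` G)\<close> by (simp add: sum.union_disjoint)
  qed
  ultimately show ?thesis
    by linarith
qed

text \<open>Rolle's theorem is applied to (-x) powr a * exp x * poly f x, whose derivative on x < 0 is
  (-x) powr a * exp x * poly (szego_step a f) x / x.\<close>

lemma tendsto_powr_exp_poly_at_bot:
  fixes a :: real and f :: "real poly"
  shows "((\<lambda>x. (-x) powr a * exp x * poly f x) \<longlongrightarrow> 0) at_bot"
proof -
  have monomial: "((\<lambda>y. y powr a * exp (-y) * (coeff f i * (-y) ^ i)) \<longlongrightarrow> 0) at_top" for i
  proof (rule tendsto_0_le[where K = 1])
    have "((\<lambda>y::real. y powr (a + real i) * exp (-y)) \<longlongrightarrow> 0) at_top"
      by real_asymp
    then show "((\<lambda>y. \<bar>coeff f i\<bar> * (y powr (a + real i) * exp (-y))) \<longlongrightarrow> 0) at_top"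
      by (rule tendsto_mult_right_zero)
    show "\<forall>\<^sub>F y in at_top. norm (y powr a * exp (-y) * (coeff f i * (-y) ^ i))
            \<le> norm (\<bar>coeff f i\<bar> * (y powr (a + real i) * exp (-y))) * 1"
      using eventually_gt_at_top[of 0]
      by eventually_elim (simp add: abs_mult power_abs powr_add powr_realpow)
  qed
  have "((\<lambda>y. (\<Sum>i\<le>degree f. y powr a * exp (-y) * (coeff f i * (-y) ^ i))) \<longlongrightarrow> 0) at_top"
    by (intro tendsto_null_sum monomial)
  then have "((\<lambda>y. (- (-y)) powr a * exp (-y) * poly f (-y)) \<longlongrightarrow> 0) at_top"
    by (simp add: poly_altdef sum_distrib_left)
  then show ?thesis
    by (simp add: filterlim_at_bot_mirror)
qed

lemma tendsto_powr_exp_poly_at_left_0: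
  fixes a :: real and f :: "real poly"
  assumes "0 \<le> a" "0 < a \<or> poly f 0 = 0"
  shows "((\<lambda>x. (-x) powr a * exp x * poly f x) \<longlongrightarrow> 0) (at_left 0)"
proof -
  have lim_powr: "((\<lambda>x. (-x) powr a) \<longlongrightarrow> (if 0 < a then 0 else 1)) (at_left (0::real))"
  proof (cases "0 < a")
    case True
    have "((\<lambda>x::real. (-x) powr a) \<longlongrightarrow> 0) (at_left 0)"
      by (rule tendsto_zero_powrI)
        (use True in \<open>auto intro!: tendsto_eq_intros simp: eventually_at_left_field intro: exI[of _ "-1"]\<close>)
    with True show ?thesis by simp
  next
    case False
    with assms(1) have "\<forall>\<^sub>F x in at_left (0::real). (-x) powr a = 1"
      by (auto simp: eventually_at_left_field intro: exI[of _ "-1"])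
    with False show ?thesis
      by (simp add: tendsto_eventually)
  qed
  have "((\<lambda>x. exp x * poly f x) \<longlongrightarrow> exp 0 * poly f 0) (at_left 0)"
    by (intro tendsto_intros)
  from tendsto_mult[OF lim_powr this] assms(2) show ?thesis
    by (simp add: mult.assoc split: if_splits)
qed

lemma has_real_derivative_powr_exp_poly:
  fixes f :: "real poly"
  assumes "x < 0"
  shows "((\<lambda>x. (-x) powr a * exp x * poly f x) has_real_derivative
          (-x) powr a * exp x * poly (szego_step a f) x / x) (at x)"
proof -
  have "((\<lambda>x. (-x) powr a * exp x * poly f x) has_real_derivative
        (a * (-x) powr (a - 1) * (-1) * exp x + (-x) powr a * exp x) * poly f x
          + (-x) powr a * exp x * poly (pderiv f) x) (at x)"
    using assms by (auto intro!: derivative_eq_intros poly_DERIV)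
  moreover have "(-x) powr (a - 1) = (-x) powr a / (-x)"
    using assms by (simp add: powr_diff)
  ultimately show ?thesis
    using assms by (simp add: poly_szego_step field_simps)
qed

lemma proots_count_neg_szego_step:
  fixes f :: "real poly"
  assumes "f \<noteq> 0" "0 \<le> a"
  shows "proots_count f {..<0} + (if 0 < a \<or> poly f 0 = 0 then 1 else 0)
           \<le> proots_count (szego_step a f) {..<0}"
  using assms
  by (intro proots_count_neg_le_DERIV[OF _ szego_step_nonzero has_real_derivative_powr_exp_poly]
      tendsto_powr_exp_poly_at_bot tendsto_powr_exp_poly_at_left_0 order_le_Suc_order_szego_step)
    auto

section \<open>Sign changes of the coefficient sequence\<close>

text \<open>The eventual sign is recorded because it is where multiplying R by x - p gains its extra
  sign change.\<close>
definition sign_alternating :: "(nat \<Rightarrow> real) \<Rightarrow> nat \<Rightarrow> bool" where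
  "sign_alternating g m \<longleftrightarrow> (\<exists>i. i 0 = 0
      \<and> (\<forall>s<m. i s < i (Suc s) \<and> g (i s) * g (i (Suc s)) < 0)
      \<and> (\<forall>\<^sub>F j in sequentially. 0 < g j * g (i m)))"

lemma sign_alternating_scale:
  assumes "sign_alternating g m" "\<And>j. 0 < w j"
  shows "sign_alternating (\<lambda>j. w j * g j) m"
proof -
  obtain i where i: "i 0 = 0" "\<forall>s<m. i s < i (Suc s) \<and> g (i s) * g (i (Suc s)) < 0"
    and ev: "\<forall>\<^sub>F j in sequentially. 0 < g j * g (i m)"
    using assms(1) unfolding sign_alternating_def by blast
  have pos: "0 < w j * w k" for j k
    using assms(2) by simp
  have prod: "w j * g j * (w k * g k) = (w j * w k) * (g j * g k)" for j k
    by (simp add: algebra_simps)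
  have "w (i s) * g (i s) * (w (i (Suc s)) * g (i (Suc s))) < 0" if "s < m" for s
    unfolding prod using pos i that by (simp add: mult_pos_neg)
  moreover have "\<forall>\<^sub>F j in sequentially. 0 < w j * g j * (w (i m) * g (i m))"
    using ev by eventually_elim (simp add: prod pos)
  ultimately show ?thesis
    using i unfolding sign_alternating_def by (intro exI[of _ i]) auto
qed

lemma sign_alternating_imp_roots:
  fixes P :: "real poly"
  assumes "sign_alternating (\<lambda>j. poly P (real j + x0)) m"
  shows "\<exists>T. finite T \<and> card T = m \<and> (\<forall>t\<in>T. x0 < t \<and> poly P t = 0)"
proof -
  obtain i where i: "\<And>s. s < m \<Longrightarrow> i s < i (Suc s)
      \<and> poly P (real (i s) + x0) * poly P (real (i (Suc s)) + x0) < 0"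
    using assms unfolding sign_alternating_def by blast
  define t where
    "t s = (SOME t. real (i s) + x0 < t \<and> t < real (i (Suc s)) + x0 \<and> poly P t = 0)" for s
  have t: "real (i s) + x0 < t s \<and> t s < real (i (Suc s)) + x0 \<and> poly P (t s) = 0" if "s < m" for s
    unfolding t_def
    by (rule someI_ex) (use poly_IVT[of "real (i s) + x0" "real (i (Suc s)) + x0" P] i[OF that] in auto)
  have t_mono: "t s < t s'" if "s < s'" "s' < m" for s s'
  proof -
    have mono: "i n \<le> i (Suc n)" if "n \<in> {..<m}" for n
      using i[of n] that by simp
    have "i (Suc s) \<le> i s'"
      by (rule lift_Suc_mono_le_ivl[of "{..<m}" i, OF mono]) (use that in auto)
    with t[of s] t[of s'] that show ?thesis
      by linarith
  qed
  have "inj_on t {..<m}"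
    by (rule inj_onI) (metis lessThan_iff linorder_neqE_nat order_less_irrefl t_mono)
  moreover have "x0 < t s" if "s < m" for s
    using t[OF that] by linarith
  ultimately show ?thesis
    using t by (intro exI[of _ "t ` {..<m}"]) (auto simp: card_image)
qed

text \<open>Take j to be the first index after a at which g has the sign of g b: then g (j - 1) does not,
  and both terms of c j have the sign opposite to g b.\<close>
lemma opposite_sign_between:
  fixes g c w :: "nat \<Rightarrow> real"
  assumes "a < b" "g a * g b < 0" "0 < p"
    and w: "\<And>j. 0 < j \<Longrightarrow> 0 < w j"
    and c: "\<And>j. 0 < j \<Longrightarrow> c j = w j * g (j - 1) - p * g j"
  shows "\<exists>j. a < j \<and> j \<le> b \<and> c j * g b < 0"
proof -
  let ?P = "\<lambda>j. a < j \<and> 0 < g j * g b"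
  define j where "j = (LEAST j. ?P j)"
  have "0 < g b * g b"
    using assms(2) by (auto simp: zero_less_mult_iff mult_less_0_iff)
  with assms(1) have "?P b" by blast
  then have j: "a < j" "0 < g j * g b" "j \<le> b"
    using LeastI[of ?P b] Least_le[of ?P b] by (auto simp: j_def)
  have before: "g (j - 1) * g b \<le> 0"
  proof (cases "j - 1 = a")
    case False
    with j(1) have "a < j - 1" "j - 1 < j" by auto
    then show ?thesis
      using not_less_Least[of "j - 1" ?P] by (auto simp: j_def)
  qed (use assms(2) in simp)
  have "0 < j"
    using j(1) by simp
  have "c j * g b = w j * (g (j - 1) * g b) - p * (g j * g b)"
    unfolding c[OF \<open>0 < j\<close>] by (simp add: algebra_simps)
  also have "\<dots> < 0"
    using w[OF \<open>0 < j\<close>] j(2) before assms(3) by (smt (verit) mult_nonneg_nonpos mult_pos_pos)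
  finally show ?thesis
    using j by blast
qed

lemma mult_neg_of_opposite_signs:
  fixes x y a b :: real
  assumes "x * a < 0" "y * b < 0" "a * b < 0"
  shows "x * y < 0"
  using assms by (auto simp: mult_less_0_iff)

lemma mult_neg_sign_trans:
  fixes x y a :: real
  assumes "x * a < 0" "0 < y * a"
  shows "x * y < 0"
  using assms by (auto simp: mult_less_0_iff zero_less_mult_iff)

lemma mult_pos_trans:
  fixes x y z :: real
  assumes "0 < x * y" "0 < y * z"
  shows "0 < x * z"
  using assms by (auto simp: zero_less_mult_iff)

lemma opposite_sign_indices:
  fixes g c w :: "nat \<Rightarrow> real" and i :: "nat \<Rightarrow> nat"
  assumes i: "\<And>s. s < v \<Longrightarrow> i s < i (Suc s) \<and> g (i s) * g (i (Suc s)) < 0"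
    and "i 0 = 0" "g 0 \<noteq> 0" "0 < p"
    and w: "\<And>j. 0 < j \<Longrightarrow> 0 < w j"
    and c0: "c 0 = - p * g 0" and c: "\<And>j. 0 < j \<Longrightarrow> c j = w j * g (j - 1) - p * g j"
  obtains k where "k 0 = 0" "\<And>s. s \<le> v \<Longrightarrow> k s \<le> i s \<and> c (k s) * g (i s) < 0"
    "\<And>s. s < v \<Longrightarrow> i s < k (Suc s)"
proof -
  define k where
    "k s = (if s = 0 then 0 else SOME j. i (s - 1) < j \<and> j \<le> i s \<and> c j * g (i s) < 0)" for s
  have k_Suc: "i s < k (Suc s) \<and> k (Suc s) \<le> i (Suc s) \<and> c (k (Suc s)) * g (i (Suc s)) < 0"
    if "s < v" for s
  proof -
    have "\<exists>j. i s < j \<and> j \<le> i (Suc s) \<and> c j * g (i (Suc s)) < 0"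
      using i[OF that] opposite_sign_between[of "i s" "i (Suc s)" g p w c] \<open>0 < p\<close> w c by auto
    from someI_ex[OF this] show ?thesis
      by (simp add: k_def)
  qed
  have "0 < g 0 * g 0"
    using \<open>g 0 \<noteq> 0\<close> not_real_square_gt_zero by blast
  with \<open>0 < p\<close> have "c 0 * g 0 < 0"
    by (simp add: c0 mult.assoc)
  then have "k s \<le> i s \<and> c (k s) * g (i s) < 0" if "s \<le> v" for s
    using that k_Suc \<open>i 0 = 0\<close> by (cases s) (auto simp: k_def)
  moreover have "k 0 = 0"
    by (simp add: k_def)
  ultimately show ?thesis
    using that k_Suc by blast
qed

lemma sign_alternating_step:
  fixes g c w :: "nat \<Rightarrow> real"
  assumes alt: "sign_alternating g v" and "0 < p"
    and w: "\<And>j. 0 < j \<Longrightarrow> 0 < w j"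
    and c0: "c 0 = - p * g 0" and c: "\<And>j. 0 < j \<Longrightarrow> c j = w j * g (j - 1) - p * g j"
    and ev: "\<forall>\<^sub>F j in sequentially. 0 < c j * g j"
  shows "sign_alternating c (Suc v)"
proof -
  obtain i where i0: "i 0 = 0"
    and i: "\<And>s. s < v \<Longrightarrow> i s < i (Suc s) \<and> g (i s) * g (i (Suc s)) < 0"
    and ev_g: "\<forall>\<^sub>F j in sequentially. 0 < g j * g (i v)"
    using alt unfolding sign_alternating_def by blast
  obtain N where N: "\<And>j. N \<le> j \<Longrightarrow> 0 < c j * g j \<and> 0 < g j * g (i v)"
    using eventually_conj[OF ev ev_g] by (auto simp: eventually_sequentially)
  have "g 0 \<noteq> 0"
    using i[of 0] N[of N] i0 by (cases v) auto
  then obtain k where k0: "k 0 = 0"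
    and k: "\<And>s. s \<le> v \<Longrightarrow> k s \<le> i s \<and> c (k s) * g (i s) < 0"
    and k_Suc: "\<And>s. s < v \<Longrightarrow> i s < k (Suc s)"
    using opposite_sign_indices[OF i i0 _ \<open>0 < p\<close> w c0 c] by blast
  define J where "J = max N (Suc (i v))"
  define i' where "i' s = (if s \<le> v then k s else J)" for s
  have "N \<le> J"
    by (simp add: J_def)
  then have cJ: "0 < c J * g (i v)"
    using N mult_pos_trans by blast
  have i'_step: "i' s < i' (Suc s) \<and> c (i' s) * c (i' (Suc s)) < 0" if "s < Suc v" for s
  proof (cases "s < v")
    case True
    then have "i' s \<le> i s" "i s < i' (Suc s)"
      and sign: "c (i' s) * g (i s) < 0" "c (i' (Suc s)) * g (i (Suc s)) < 0"
      using k[of s] k[of "Suc s"] k_Suc[of s] by (simp_all add: i'_def)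
    with i[OF True] show ?thesis
      using mult_neg_of_opposite_signs[OF sign] by simp
  next
    case False
    with that have "s = v"
      by simp
    moreover have "k v < J" "c (k v) * c J < 0"
      using k[of v] mult_neg_sign_trans cJ by (auto simp: J_def)
    ultimately show ?thesis
      by (simp add: i'_def)
  qed
  have "0 < c j * c J" if "N \<le> j" for j
  proof -
    have "0 < c j * g (i v)"
      using N[OF that] mult_pos_trans by blast
    moreover have "0 < g (i v) * c J"
      using cJ by (simp add: mult.commute)
    ultimately show ?thesis
      by (rule mult_pos_trans)
  qed
  then have "\<forall>\<^sub>F j in sequentially. 0 < c j * c (i' (Suc v))"
    by (auto simp: i'_def eventually_sequentially)
  with i'_step k0 show ?thesis
    unfolding sign_alternating_def by (intro exI[of _ i']) (simp add: i'_def)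
qed

lemma poly_0_mult_lead_coeff_pos:
  fixes Q :: "real poly"
  assumes "poly Q 0 \<noteq> 0" "\<forall>x>0. poly Q x \<noteq> 0"
  shows "0 < poly Q 0 * lead_coeff Q"
proof (rule ccontr)
  assume "\<not> 0 < poly Q 0 * lead_coeff Q"
  moreover have "Q \<noteq> 0"
    using assms(1) by auto
  ultimately have neg: "poly Q 0 * lead_coeff Q < 0"
    using assms(1) by (simp add: not_less less_le)
  have "\<forall>\<^sub>F x in at_top. 0 < x \<and> 0 < poly Q x * lead_coeff Q"
    using eventually_gt_at_top[of 0] eventually_poly_sign_lead_coeff[OF \<open>Q \<noteq> 0\<close>]
    by (rule eventually_conj)
  then obtain x where x: "0 < x" "0 < poly Q x * lead_coeff Q"
    by (auto simp: eventually_at_top_linorder)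
  have "poly Q 0 * poly Q x < 0"
    using mult_neg_sign_trans[OF neg x(2)] .
  with poly_IVT[OF x(1)] assms(2) show False
    by auto
qed

text \<open>A Descartes-type rule of signs: multiplying Q by x - p with p > 0 adds a sign change to the
  coefficients of e^x Q.\<close>
lemma exp_poly_coeff_sign_alternating:
  assumes "Q \<noteq> 0" "poly Q 0 \<noteq> 0"
  shows "sign_alternating (exp_poly_coeff Q) (proots_count Q {0<..})"
  using assms
proof (induction "proots_count Q {0<..}" arbitrary: Q)
  case 0
  then have "\<forall>x>0. poly Q x \<noteq> 0"
    using proots_count_eq_0_iff[of Q "{0<..}"] by simp
  with 0 have "0 < lead_coeff Q * exp_poly_coeff Q 0"
    using poly_0_mult_lead_coeff_pos by (simp add: exp_poly_coeff_at_0 mult.commute)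
  with eventually_exp_poly_coeff_sign[OF \<open>Q \<noteq> 0\<close>]
  have "\<forall>\<^sub>F j in sequentially. 0 < exp_poly_coeff Q j * exp_poly_coeff Q 0"
    by (auto elim: eventually_mono intro: mult_pos_trans)
  with "0.hyps" show ?case
    unfolding sign_alternating_def by (intro exI[of _ "\<lambda>_. 0"]) simp
next
  case (Suc m)
  then obtain p where "0 < p" "poly Q p = 0"
    using proots_count_eq_0_iff[of Q "{0<..}"] by (metis greaterThan_iff nat.distinct(1))
  then obtain Q1 where Q1: "Q = [:-p, 1:] * Q1"
    by (metis dvdE poly_eq_0_iff_dvd)
  with Suc.prems have "Q1 \<noteq> 0" "poly Q1 0 \<noteq> 0"
    by auto
  have "proots_count Q {0<..} = proots_count [:-p, 1:] {0<..} + proots_count Q1 {0<..}"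
    unfolding Q1 by (rule proots_count_mult) (use \<open>Q1 \<noteq> 0\<close> in auto)
  also have "\<dots> = 1 + proots_count Q1 {0<..}"
    using \<open>0 < p\<close> by (simp add: proots_count_linear)
  finally have "proots_count Q {0<..} = 1 + proots_count Q1 {0<..}" .
  with Suc.hyps(2) have alt: "sign_alternating (exp_poly_coeff Q1) m"
    using Suc.hyps(1) \<open>Q1 \<noteq> 0\<close> \<open>poly Q1 0 \<noteq> 0\<close> by simp
  have Q_eq: "Q = pCons 0 Q1 + smult (-p) Q1"
    unfolding Q1 by simp
  have rec: "exp_poly_coeff Q j = of_nat j * exp_poly_coeff Q1 (j - 1) - p * exp_poly_coeff Q1 j" for j
    unfolding Q_eq exp_poly_coeff_add exp_poly_coeff_smult exp_poly_coeff_pCons_0 by simp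
  have "lead_coeff Q = lead_coeff Q1"
    unfolding Q1 lead_coeff_mult by simp
  then have "\<forall>\<^sub>F j in sequentially. 0 < exp_poly_coeff Q j * exp_poly_coeff Q1 j"
    using eventually_conj[OF eventually_exp_poly_coeff_sign[OF Suc.prems(1)]
        eventually_exp_poly_coeff_sign[OF \<open>Q1 \<noteq> 0\<close>]]
    by (auto elim!: eventually_mono intro: mult_pos_trans simp: mult.commute)
  with Suc.hyps(2) show ?case
    using sign_alternating_step[OF alt \<open>0 < p\<close>, of real] rec by simp
qed

section \<open>Real factors of the coefficient polynomial\<close>

lemma poly_map_poly_of_real:
  "poly (map_poly of_real p) (of_real x) = (of_real (poly p x) :: 'a::{real_algebra_1, comm_ring_1})"
  by (induction p) (simp_all add: map_poly_pCons)

lemma map_poly_of_real_mult: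
  "map_poly of_real (p * q) = (map_poly of_real p * map_poly of_real q :: 'a::{real_algebra_1, comm_ring_1} poly)"
  by (rule poly_eqI) (simp add: coeff_map_poly coeff_mult)

lemma poly_eqI_of_nat:
  fixes p q :: "'a::{idom, ring_char_0} poly"
  assumes "\<And>j. poly p (of_nat j) = poly q (of_nat j)"
  shows "p = q"
proof (rule ccontr)
  assume "p \<noteq> q"
  then have "finite {x. poly (p - q) x = 0}"
    by (intro poly_roots_finite) simp
  moreover have "range of_nat \<subseteq> {x. poly (p - q) x = 0}"
    using assms by auto
  ultimately have "finite (range (of_nat :: nat \<Rightarrow> 'a))"
    by (rule finite_subset[rotated])
  then show False
    using finite_imageD[OF _ inj_of_nat] by auto
qed

lemma exp_poly_coeff_factorization:
  fixes R :: "real poly" and A :: "complex multiset"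
  assumes "\<forall>j::nat. complex_of_real (exp_poly_coeff R j) = c * (\<Prod>a\<in>#A. of_nat j + a)"
  obtains P where "\<And>j. exp_poly_coeff R j = poly P (real j)"
    and "map_poly of_real P = smult c (\<Prod>a\<in>#A. [:a, 1:])"
proof -
  obtain P where P: "\<forall>j. exp_poly_coeff R j = poly P (real j)"
    using exp_poly_coeff_poly by blast
  have "map_poly of_real P = smult c (\<Prod>a\<in>#A. [:a, 1:])"
  proof (rule poly_eqI_of_nat)
    fix j :: nat
    have "poly (map_poly of_real P) (of_nat j) = poly (map_poly of_real P) (of_real (real j))"
      by simp
    also have "\<dots> = complex_of_real (poly P (real j))"
      by (rule poly_map_poly_of_real)
    also have "\<dots> = c * (\<Prod>a\<in>#A. of_nat j + a)"
      using P assms by simp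
    also have "\<dots> = poly (smult c (\<Prod>a\<in>#A. [:a, 1:])) (of_nat j)"
      by (simp add: poly_prod_mset add.commute)
    finally show "poly (map_poly of_real P) (of_nat j) = poly (smult c (\<Prod>a\<in>#A. [:a, 1:])) (of_nat j)" .
  qed
  with P that show ?thesis
    by blast
qed

lemma minus_root_in_factors:
  fixes P :: "real poly" and A :: "complex multiset"
  assumes "map_poly of_real P = smult c (\<Prod>a\<in>#A. [:a, 1:])" "c \<noteq> 0" "poly P t = 0"
  shows "- complex_of_real t \<in># A"
proof -
  have "c * (\<Prod>a\<in>#A. a + of_real t) = 0"
    using arg_cong[OF assms(1), of "\<lambda>q. poly q (of_real t)"] assms(3)
    by (simp add: poly_map_poly_of_real poly_prod_mset)
  with assms(2) obtain a where "a \<in># A" "a + of_real t = 0"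
    by (auto simp: prod_mset_zero_iff)
  moreover from this(2) have "a = - of_real t"
    by (simp add: eq_neg_iff_add_eq_0)
  ultimately show ?thesis
    by simp
qed

lemma prod_linear_factors_dvd:
  fixes P :: "real poly" and A :: "complex multiset"
  assumes "map_poly of_real P = smult c (\<Prod>a\<in>#A. [:a, 1:])"
    and "image_mset of_real (mset bs) \<subseteq># A"
  shows "(\<Prod>b\<leftarrow>bs. [:b, 1:]) dvd P"
  using assms
proof (induction bs arbitrary: P A)
  case (Cons b bs)
  define A' where "A' = A - {#of_real b#}"
  have A: "A = add_mset (of_real b) A'"
    using Cons.prems(2) by (auto simp: A'_def dest: mset_subset_eqD)
  have "poly (map_poly of_real P) (of_real (-b)) = (0 :: complex)"
    by (simp add: Cons.prems(1) A)
  then have "poly P (-b) = 0"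
    unfolding poly_map_poly_of_real by simp
  then obtain P1 where P1: "P = [:b, 1:] * P1"
    by (metis dvdE minus_minus of_real_eq_0_iff poly_eq_0_iff_dvd)
  have "map_poly of_real [:b, 1:] * map_poly of_real P1 = (map_poly of_real P :: complex poly)"
    unfolding P1 by (rule map_poly_of_real_mult[symmetric])
  then have "[:of_real b, 1:] * map_poly of_real P1 = [:of_real b, 1:] * smult c (\<Prod>a\<in>#A'. [:a, 1:])"
    using Cons.prems(1) by (simp add: A map_poly_pCons mult.left_commute)
  then have "map_poly of_real P1 = smult c (\<Prod>a\<in>#A'. [:a, 1:])"
    by (subst (asm) mult_left_cancel) simp_all
  moreover have "image_mset of_real (mset bs) \<subseteq># A'"
    using Cons.prems(2) by (simp add: A)
  ultimately have "(\<Prod>b\<leftarrow>bs. [:b, 1:]) dvd P1"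
    by (rule Cons.IH)
  then show ?case
    unfolding P1 list.map(2) prod_list.Cons by (rule mult_dvd_mono[OF dvd_refl])
qed simp

section \<open>Negative factors and real roots\<close>

lemma exp_poly_coeff_X_power_mult:
  "exp_poly_coeff ([:0, 1:] ^ k * Q) (j + k) = fact (j + k) / fact j * exp_poly_coeff Q j"
proof (induction k)
  case (Suc k)
  have "[:0, 1:] ^ Suc k * Q = pCons 0 ([:0, 1:] ^ k * Q)"
    by (simp add: mult.assoc)
  then show ?case
    by (simp add: exp_poly_coeff_pCons_0 Suc.IH)
qed simp

lemma exp_poly_coeff_X_power_mult_below:
  "j < k \<Longrightarrow> exp_poly_coeff ([:0, 1:] ^ k * Q) j = 0"
proof (induction k arbitrary: j)
  case (Suc k)
  have "[:0, 1:] ^ Suc k * Q = pCons 0 ([:0, 1:] ^ k * Q)"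
    by (simp add: mult.assoc)
  with Suc show ?case
    by (cases j) (simp_all add: exp_poly_coeff_pCons_0)
qed simp

lemma exp_poly_coeff_below_order:
  assumes "j < order 0 R"
  shows "exp_poly_coeff R j = 0"
proof (cases "R = 0")
  case False
  then obtain Q where "R = [:0, 1:] ^ order 0 R * Q"
    using order_decomp[of R 0] by auto
  with assms show ?thesis
    by (metis exp_poly_coeff_X_power_mult_below)
qed simp

lemma exp_poly_coeff_shift_sign_alternating:
  assumes "R \<noteq> 0"
  shows "sign_alternating (\<lambda>j. exp_poly_coeff R (j + order 0 R)) (proots_count R {0<..})"
proof -
  define k where "k = order 0 R"
  obtain Q where Q: "R = [:0, 1:] ^ k * Q" "\<not> [:0, 1:] dvd Q"
    using order_decomp[OF assms, of 0] by (auto simp: k_def)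
  with assms have "Q \<noteq> 0" "poly Q 0 \<noteq> 0"
    by (auto simp: dvd_iff_poly_eq_0)
  have "proots_count ([:0, 1:] ^ k) {0<..} = 0"
    by (simp add: proots_count_eq_0_iff poly_power)
  then have "proots_count R {0<..} = proots_count Q {0<..}"
    unfolding Q(1) using \<open>Q \<noteq> 0\<close> by (simp add: proots_count_mult)
  then have "sign_alternating (exp_poly_coeff Q) (proots_count R {0<..})"
    using exp_poly_coeff_sign_alternating[OF \<open>Q \<noteq> 0\<close> \<open>poly Q 0 \<noteq> 0\<close>] by simp
  then have "sign_alternating (\<lambda>j. fact (j + k) / fact j * exp_poly_coeff Q j) (proots_count R {0<..})"
    by (rule sign_alternating_scale) simp
  moreover have "fact (j + k) / fact j * exp_poly_coeff Q j = exp_poly_coeff R (j + k)" for j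
    unfolding Q(1) by (rule exp_poly_coeff_X_power_mult[symmetric])
  ultimately show ?thesis
    by (simp add: k_def)
qed

lemma negative_factors_ge_positive_roots:
  fixes R :: "real poly" and A :: "complex multiset"
  assumes "R \<noteq> 0" "c \<noteq> 0"
    and coeff_R: "\<And>j. exp_poly_coeff R j = poly P (real j)"
    and P: "map_poly of_real P = smult c (\<Prod>a\<in>#A. [:a, 1:])"
  shows "\<exists>S. S \<subseteq> set_mset A \<and> (\<forall>a\<in>S. Im a = 0 \<and> Re a < 0)
           \<and> proots_count R {0<..} + (order 0 R - 1) \<le> card S
           \<and> (\<forall>t\<in>{1..order 0 R - 1}. - of_nat t \<in> S)"
proof -
  define k where "k = order 0 R"
  have "sign_alternating (\<lambda>j. poly P (real j + real k)) (proots_count R {0<..})"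
    using exp_poly_coeff_shift_sign_alternating[OF assms(1)] by (simp add: k_def coeff_R)
  from sign_alternating_imp_roots[OF this] obtain T where T: "finite T" "card T = proots_count R {0<..}"
    and T_roots: "\<forall>t\<in>T. real k < t \<and> poly P t = 0"
    by blast
  define S1 where "S1 = (\<lambda>t. - complex_of_real t) ` T"
  define S2 where "S2 = (\<lambda>u. - of_nat u :: complex) ` {1..k - 1}"
  have "S1 \<subseteq> set_mset A"
    using T_roots minus_root_in_factors[OF P assms(2)] by (auto simp: S1_def)
  moreover have "S2 \<subseteq> set_mset A"
  proof
    fix a assume "a \<in> S2"
    then obtain u where "a = - of_nat u" "u < k"
      by (auto simp: S2_def)
    moreover have "poly P (real u) = 0"
      using coeff_R[of u] exp_poly_coeff_below_order[of u R] \<open>u < k\<close> by (simp add: k_def)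
    ultimately show "a \<in> set_mset A"
      using minus_root_in_factors[OF P assms(2), of "real u"] by simp
  qed
  moreover have S1_re: "Im a = 0 \<and> Re a < - real k" if "a \<in> S1" for a
    using that T_roots by (auto simp: S1_def)
  moreover have S2_re: "Im a = 0 \<and> - real k < Re a \<and> Re a < 0" if "a \<in> S2" for a
    using that by (auto simp: S2_def)
  moreover have "card (S1 \<union> S2) = proots_count R {0<..} + (k - 1)"
  proof -
    have "S1 \<inter> S2 = {}"
      using S1_re S2_re by fastforce
    moreover have "inj_on (\<lambda>t. - complex_of_real t) T" "inj_on (\<lambda>u. - of_nat u :: complex) {1..k - 1}"
      by (auto simp: inj_on_def)
    ultimately show ?thesis
      using T by (simp add: S1_def S2_def card_Un_disjoint card_image)
  qed
  moreover have "- of_nat t \<in> S2" if "t \<in> {1..k - 1}" for t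
    using that by (simp add: S2_def)
  moreover have "- real k \<le> 0"
    by simp
  ultimately show ?thesis
    unfolding k_def by (intro exI[of _ "S1 \<union> S2"]) fastforce
qed

lemma foldr_szego_step_nonzero: "f \<noteq> 0 \<Longrightarrow> foldr szego_step bs f \<noteq> 0"
  by (induction bs) (simp_all add: szego_step_nonzero)

lemma poly_foldr_szego_step_at_0: "0 \<in> set bs \<Longrightarrow> poly (foldr szego_step bs f) 0 = 0"
  by (induction bs) (auto simp: poly_szego_step)

lemma proots_count_neg_foldr_szego_step:
  fixes f :: "real poly"
  assumes "f \<noteq> 0" "\<forall>b\<in>set bs. 0 \<le> b"
  shows "proots_count f {..<0} + length (filter (\<lambda>b. 0 < b) bs) + (count_list bs 0 - 1)
           \<le> proots_count (foldr szego_step bs f) {..<0}"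
  using assms(2)
proof (induction bs)
  case (Cons b bs)
  let ?g = "foldr szego_step bs f"
  have "proots_count ?g {..<0} + (if 0 < b \<or> poly ?g 0 = 0 then 1 else 0)
          \<le> proots_count (szego_step b ?g) {..<0}"
    using Cons.prems by (intro proots_count_neg_szego_step foldr_szego_step_nonzero assms(1)) simp
  moreover have "0 < count_list bs 0 \<Longrightarrow> poly ?g 0 = 0"
    using count_list_0_iff[of bs 0] poly_foldr_szego_step_at_0[of bs f] by auto
  ultimately show ?case
    using Cons by (cases "count_list bs 0") auto
qed simp

lemma nonneg_real_factors_list:
  fixes A :: "complex multiset"
  obtains bs :: "real list" where "image_mset of_real (mset bs) \<subseteq># A" "\<forall>b\<in>set bs. 0 \<le> b"
    "length (filter (\<lambda>b. 0 < b) bs) = size (filter_mset (\<lambda>a. Im a = 0 \<and> Re a > 0) A)"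
    "count_list bs 0 = count A 0"
proof -
  define F where "F = filter_mset (\<lambda>a. Im a = 0 \<and> Re a > 0) A"
  obtain ps where ps: "mset ps = image_mset Re F"
    using ex_mset by blast
  define bs where "bs = replicate (count A 0) 0 @ ps"
  have ps_pos: "0 < b" if "b \<in> set ps" for b
  proof -
    have "b \<in># mset ps"
      using that by simp
    then have "b \<in># image_mset Re F"
      by (simp only: ps)
    then show ?thesis
      by (auto simp: F_def)
  qed
  have "image_mset complex_of_real (mset bs) = replicate_mset (count A 0) 0 + F"
  proof -
    have "image_mset (\<lambda>a. complex_of_real (Re a)) F = image_mset (\<lambda>a. a) F"
      by (rule image_mset_cong) (simp add: F_def complex_eq_iff)
    then show ?thesis
      by (simp add: bs_def ps image_mset.compositionality o_def)
  qed
  also have "\<dots> \<subseteq># A"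
  proof (rule mset_subset_eqI)
    fix x
    show "count (replicate_mset (count A 0) 0 + F) x \<le> count A x"
      by (cases "x = 0") (auto simp: F_def)
  qed
  finally have "image_mset complex_of_real (mset bs) \<subseteq># A" .
  moreover have "\<forall>b\<in>set bs. 0 \<le> b"
    by (auto simp: bs_def intro: less_imp_le ps_pos)
  moreover have "filter (\<lambda>b. 0 < b) bs = ps"
    using ps_pos by (simp add: bs_def filter_True)
  then have "length (filter (\<lambda>b. 0 < b) bs) = size F"
    by (metis ps size_image_mset size_mset)
  moreover have "count_list (replicate q (0::real)) 0 = q" for q
    by (induction q) simp_all
  then have "count_list bs 0 = count A 0"
    using ps_pos count_list_0_iff[of ps 0] by (auto simp: bs_def)
  ultimately show ?thesis
    using that by (simp add: F_def)
qed

lemma foldr_szego_step_of_dvd: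
  fixes R P :: "real poly"
  assumes "R \<noteq> 0" and coeff_R: "\<And>j. exp_poly_coeff R j = poly P (real j)"
    and "(\<Prod>b\<leftarrow>bs. [:b, 1:]) dvd P"
  obtains R0 where "R0 \<noteq> 0" "R = foldr szego_step bs R0"
proof -
  obtain Q0 where Q0: "P = Q0 * (\<Prod>b\<leftarrow>bs. [:b, 1:])"
    using assms(3) by (metis dvdE mult.commute)
  obtain R0 where R0: "\<forall>j. exp_poly_coeff R0 j = poly Q0 (real j)"
    using exp_poly_coeff_surj by blast
  have R: "R = foldr szego_step bs R0"
  proof (rule exp_poly_coeff_eqI)
    fix j
    have "poly (\<Prod>b\<leftarrow>bs. [:b, 1:]) (real j) = (\<Prod>b\<leftarrow>bs. real j + b)"
      by (induction bs) (simp_all add: algebra_simps)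
    then have "exp_poly_coeff R j = (\<Prod>b\<leftarrow>bs. real j + b) * poly Q0 (real j)"
      by (simp add: coeff_R Q0)
    also have "\<dots> = exp_poly_coeff (foldr szego_step bs R0) j"
      by (simp add: R0 exp_poly_coeff_foldr_szego_step)
    finally show "exp_poly_coeff R j = exp_poly_coeff (foldr szego_step bs R0) j" .
  qed
  moreover have "foldr szego_step bs 0 = 0"
    by (induction bs) (simp_all add: szego_step_def)
  with R assms(1) have "R0 \<noteq> 0"
    by auto
  ultimately show ?thesis
    by (rule that[rotated])
qed

lemma negative_roots_ge_nonneg_factors:
  fixes R :: "real poly" and A :: "complex multiset"
  assumes "R \<noteq> 0"
    and coeff_R: "\<And>j. exp_poly_coeff R j = poly P (real j)"
    and P: "map_poly of_real P = smult c (\<Prod>a\<in>#A. [:a, 1:])"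
  shows "size (filter_mset (\<lambda>a. Im a = 0 \<and> Re a > 0) A) + (count A 0 - 1)
           \<le> proots_count R {..<0}"
proof -
  obtain bs where bs: "image_mset of_real (mset bs) \<subseteq># A" "\<forall>b\<in>set bs. 0 \<le> b"
    "length (filter (\<lambda>b. 0 < b) bs) = size (filter_mset (\<lambda>a. Im a = 0 \<and> Re a > 0) A)"
    "count_list bs 0 = count A 0"
    by (rule nonneg_real_factors_list)
  obtain R0 where "R0 \<noteq> 0" and R: "R = foldr szego_step bs R0"
    using foldr_szego_step_of_dvd[OF assms(1) coeff_R prod_linear_factors_dvd[OF P bs(1)]] .
  have "proots_count R0 {..<0} + length (filter (\<lambda>b. 0 < b) bs) + (count_list bs 0 - 1)
      \<le> proots_count R {..<0}"
    unfolding R using \<open>R0 \<noteq> 0\<close> bs(2) by (rule proots_count_neg_foldr_szego_step)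
  then show ?thesis
    unfolding bs(3,4) by linarith
qed

lemma zero_in_factors_iff:
  fixes R P :: "real poly" and A :: "complex multiset"
  assumes "c \<noteq> 0" and coeff_R: "\<And>j. exp_poly_coeff R j = poly P (real j)"
    and P: "map_poly of_real P = smult c (\<Prod>a\<in>#A. [:a, 1:])"
  shows "0 \<in># A \<longleftrightarrow> poly R 0 = 0"
proof -
  have "complex_of_real (poly R 0) = complex_of_real (poly P 0)"
    using coeff_R[of 0] by (simp add: exp_poly_coeff_at_0)
  also have "\<dots> = poly (map_poly of_real P) (of_real 0)"
    by (rule poly_map_poly_of_real[symmetric])
  also have "\<dots> = c * (\<Prod>a\<in>#A. a)"
    by (simp add: P poly_prod_mset)
  finally have "poly R 0 = 0 \<longleftrightarrow> (\<Prod>a\<in>#A. a) = 0"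
    using assms(1) by (metis mult_eq_0_iff of_real_eq_0_iff)
  then show ?thesis
    by (simp add: prod_mset_zero_iff)
qed

theorem proposition1p3:
  fixes n :: nat and R :: "real poly" and A :: "complex multiset" and c :: complex
  assumes "n \<ge> 2"
    and "degree R = n - 1"
    and "size A = n - 1"
    and "c \<noteq> 0"
    and "\<forall>j::nat. complex_of_real (exp_poly_coeff R j) = c * (\<Prod>a\<in>#A. (of_nat j + a))"
  shows "(\<exists>S. S \<subseteq> set_mset A
              \<and> (\<forall>a\<in>S. Im a = 0 \<and> Re a < 0)
              \<and> card S \<ge> (\<Sum>x\<in>{x::real. x > 0 \<and> poly R x = 0}. order x R) + (order 0 R - 1)
              \<and> (\<forall>t\<in>{1..order 0 R - 1}. - of_nat t \<in> S))
         \<and> (order 0 R \<ge> 1 \<longrightarrow> 0 \<in># A)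
         \<and> (\<Sum>x\<in>{x::real. x < 0 \<and> poly R x = 0}. order x R)
              \<ge> size (filter_mset (\<lambda>a. Im a = 0 \<and> Re a > 0) A) + (count A 0 - 1)
         \<and> (count A 0 \<ge> 1 \<longrightarrow> poly R 0 = 0)"
proof -
  have "R \<noteq> 0"
    using assms(1,2) by auto
  obtain P where coeff_R: "\<And>j. exp_poly_coeff R j = poly P (real j)"
    and P: "map_poly of_real P = smult c (\<Prod>a\<in>#A. [:a, 1:])"
    using exp_poly_coeff_factorization[OF assms(5)] by blast
  have "proots_count R {0<..} = (\<Sum>x\<in>{x::real. x > 0 \<and> poly R x = 0}. order x R)"
    and "proots_count R {..<0} = (\<Sum>x\<in>{x::real. x < 0 \<and> poly R x = 0}. order x R)"
    by (simp_all add: proots_count_def)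
  then show ?thesis
    using negative_factors_ge_positive_roots[OF \<open>R \<noteq> 0\<close> assms(4) coeff_R P]
      negative_roots_ge_nonneg_factors[OF \<open>R \<noteq> 0\<close> coeff_R P]
      zero_in_factors_iff[OF assms(4) coeff_R P] order_root[of R 0] \<open>R \<noteq> 0\<close>
    by (auto simp: Suc_le_eq)
qed

end
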